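(* Let $n\ge2$ and $k\ge 3$ be integers, $x>0$ and $\alpha_1,\dots,\alpha_{k-2}\in\mathbb{R}$. Then $\det A_{n;k}(x,x^{\alpha_1},\dots,x^{\alpha_{k-2}})=\det A_{n;k}(x,x^{1-\alpha_{k-2}},\dots,x^{1-\alpha_1})$.
   Context: For an integer $n\ge 2$ and $y\ge0$, $y\neq 1$, let $k_n(y)=\frac1n\sum_{l=1}^{n}\frac{1-y\cos(2\pi l/n)}{(1+y^2-2y\cos(2\pi l/n))^{3/2}}-1$, and set $k_n(1)=\delta_n:=\frac{1}{4n}\sum_{l=1}^{n-1}\frac{1}{\sin(\pi l/n)}-1$. For $x_1,\dots,x_{k-1}>0$ and $x_k:=1$, $A_{n;k}(x_1,\dots,x_{k-1})$ is the $k\times k$ matrix whose $(i,j)$ entry is $k_n(x_j/x_i)$ (so diagonal entries equal $\delta_n$). *)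

theory Defs
  imports Complex_Main "Jordan_Normal_Form.Determinant"
begin

definition delta_n :: "nat \<Rightarrow> real" where
  "delta_n n = (1 / (4 * real n)) * (\<Sum>l=1..n-1. 1 / sin (pi * real l / real n)) - 1"

definition k_n :: "nat \<Rightarrow> real \<Rightarrow> real" where
  "k_n n y = (if y = 1 then delta_n n else
     (1 / real n) * (\<Sum>l=1..n.
        (1 - y * cos (2 * pi * real l / real n)) /
        (1 + y^2 - 2 * y * cos (2 * pi * real l / real n)) powr (3/2)) - 1)"

text \<open>A_{n;k}(x_1,...,x_{k-1}) where xs = [x_1,...,x_{k-1}], k = length xs + 1, x_k = 1.
  Indices are 0-based: entry (i,j) is k_n(x_{j+1}/x_{i+1}).\<close>
definition A_mat :: "nat \<Rightarrow> real list \<Rightarrow> real mat" where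
  "A_mat n xs = (let ys = xs @ [1]; k = length ys in
     mat k k (\<lambda>(i,j). k_n n (ys ! j / ys ! i)))"

end

theory Submission
  imports Defs
begin

text \<open>The (i, j) entry of A(y_1, ..., y_k) depends only on y_j / y_i. Replacing
  (y_1, ..., y_k) by (c / y_k, ..., c / y_1) turns this ratio into y_(k+1-i) / y_(k+1-j), so
  the new matrix is the transpose of the old one with rows and columns reversed
  simultaneously, and has the same determinant. For c = x and y_k = 1 this substitution maps
  (x, x^\<alpha>_1, ..., x^\<alpha>_(k-2), 1) to (x, x^(1-\<alpha>_(k-2)), ..., x^(1-\<alpha>_1), 1).\<close>

lemma det_permute_rows_cols:
  fixes A :: "'a :: comm_ring_1 mat"
  assumes A: "A \<in> carrier_mat n n" and p: "p permutes {0..<n}"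
  shows "det (mat n n (\<lambda>(i, j). A $$ (p i, p j))) = det A"
proof -
  define A' where "A' = mat n n (\<lambda>(i, j). A $$ (i, p j))"
  have A': "A' \<in> carrier_mat n n" unfolding A'_def by simp
  have p_less: "\<And>i. i < n \<Longrightarrow> p i < n"
    using p by (meson atLeastLessThan_iff permutes_in_image zero_le)
  have rows: "mat n n (\<lambda>(i, j). A $$ (p i, p j)) = mat n n (\<lambda>(i, j). A' $$ (p i, j))"
    unfolding A'_def by (rule eq_matI) (auto simp: p_less)
  have cols: "transpose_mat A' = mat n n (\<lambda>(i, j). transpose_mat A $$ (p i, j))"
    unfolding A'_def using A by (intro eq_matI) (auto simp: p_less)
  have "det A' = det (transpose_mat A')" using det_transpose[OF A'] by simp
  also have "\<dots> = signof p * det (transpose_mat A)"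
    unfolding cols by (rule det_permute_rows[OF _ p]) (use A in simp)
  also have "\<dots> = signof p * det A" using det_transpose[OF A] by simp
  finally have det_A': "det A' = signof p * det A" .
  have "det (mat n n (\<lambda>(i, j). A $$ (p i, p j))) = signof p * det A'"
    unfolding rows by (rule det_permute_rows[OF A' p])
  also have "\<dots> = (signof p * signof p) * det A" using det_A' by (simp add: ac_simps)
  also have "signof p * signof p = (1::'a)" by (simp add: sign_def)
  finally show ?thesis by simp
qed

lemma reverse_index_permutes:
  "(\<lambda>i. if i < n then n - 1 - i else i) permutes {0..<n :: nat}"
proof -
  have "bij_betw (\<lambda>i. if i < n then n - 1 - i else i) {0..<n} {0..<n}"
    by (intro bij_betw_byWitness[where f' = "\<lambda>i. n - 1 - i"]) auto
  then show ?thesis by (rule bij_imp_permutes) auto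
qed

definition ratio_mat :: "(real \<Rightarrow> 'a) \<Rightarrow> real list \<Rightarrow> 'a mat" where
  "ratio_mat f ys = mat (length ys) (length ys) (\<lambda>(i, j). f (ys ! j / ys ! i))"

lemma A_mat_eq_ratio_mat: "A_mat n xs = ratio_mat (k_n n) (xs @ [1])"
  unfolding A_mat_def ratio_mat_def Let_def ..

lemma det_ratio_mat_reflect:
  fixes f :: "real \<Rightarrow> 'a :: comm_ring_1"
  assumes c: "c \<noteq> 0" and ys: "0 \<notin> set ys"
  shows "det (ratio_mat f (map (\<lambda>y. c / y) (rev ys))) = det (ratio_mat f ys)"
proof -
  define k where "k = length ys"
  define r where "r = (\<lambda>i. if i < k then k - 1 - i else i)"
  define A where "A = ratio_mat f ys"
  have A: "A \<in> carrier_mat k k" unfolding A_def ratio_mat_def k_def by simp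
  have r_less: "\<And>i. i < k \<Longrightarrow> r i < k" unfolding r_def by auto
  have ys_nonzero: "\<And>i. i < k \<Longrightarrow> ys ! i \<noteq> 0"
    using ys unfolding k_def by (metis nth_mem)
  have "ratio_mat f (map (\<lambda>y. c / y) (rev ys)) = mat k k (\<lambda>(i, j). transpose_mat A $$ (r i, r j))"
  proof (rule eq_matI)
    fix i j assume "i < dim_row (mat k k (\<lambda>(i, j). transpose_mat A $$ (r i, r j)))"
      and "j < dim_col (mat k k (\<lambda>(i, j). transpose_mat A $$ (r i, r j)))"
    then have i: "i < k" and j: "j < k" by auto
    have "(c / ys ! r j) / (c / ys ! r i) = ys ! r i / ys ! r j"
      using c ys_nonzero[OF r_less[OF i]] ys_nonzero[OF r_less[OF j]] by simp
    then show "ratio_mat f (map (\<lambda>y. c / y) (rev ys)) $$ (i, j)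
        = mat k k (\<lambda>(i, j). transpose_mat A $$ (r i, r j)) $$ (i, j)"
      using c i j by (simp add: ratio_mat_def A_def rev_nth k_def r_def)
  qed (auto simp: ratio_mat_def k_def)
  also have "det \<dots> = det (transpose_mat A)"
    using A unfolding r_def by (intro det_permute_rows_cols reverse_index_permutes) simp
  also have "\<dots> = det A" using det_transpose[OF A] .
  finally show ?thesis unfolding A_def .
qed

lemma rev_map_upt: "rev (map g [a..<b]) = map (\<lambda>m. g (a + b - 1 - m)) [a..<b]"
  by (rule nth_equalityI) (auto simp: rev_nth)

lemma powr_tuple_reflect:
  fixes x :: real
  assumes "x > 0"
  shows "(x # map (\<lambda>m. x powr (1 - alpha (k - 1 - m))) [1..<k-1]) @ [1]
       = map (\<lambda>y. x / y) (rev ((x # map (\<lambda>m. x powr alpha m) [1..<k-1]) @ [1]))"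
  using assms by (simp add: rev_map_upt powr_diff)

theorem lemma6:
  fixes n k :: nat and x :: real and alpha :: "nat \<Rightarrow> real"
  assumes "n \<ge> 2" and "k \<ge> 3" and "x > 0"
  shows "det (A_mat n (x # map (\<lambda>m. x powr alpha m) [1..<k-1]))
       = det (A_mat n (x # map (\<lambda>m. x powr (1 - alpha (k - 1 - m))) [1..<k-1]))"
proof -
  define ys where "ys = (x # map (\<lambda>m. x powr alpha m) [1..<k-1]) @ [1]"
  have "0 \<notin> set ys" using \<open>x > 0\<close> unfolding ys_def by auto
  with \<open>x > 0\<close> have "det (ratio_mat (k_n n) ys)
      = det (ratio_mat (k_n n) (map (\<lambda>y. x / y) (rev ys)))"
    by (intro det_ratio_mat_reflect[symmetric]) simp_all
  then show ?thesis
    unfolding A_mat_eq_ratio_mat powr_tuple_reflect[OF \<open>x > 0\<close>] ys_def .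
qed

end
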